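(* Let $(\rho_0,p_0)$ solve the TOV system on $[0,R)$ with regular centre, mass function $m_0$, $g_0=\frac{m_0+4\pi p_0r^3}{r^2[1-2m_0/r]}$, $I_0(r)=\int_0^rg_0$. For real parameters $\Delta p$ and $\delta\rho_c$ define $$\delta p_1(r)=\frac{\Delta p\sqrt{1-2m_0/r}\,e^{-2I_0(r)}}{1+4\pi\Delta p\int_0^r\frac{s\,e^{-2I_0(s)}}{\sqrt{1-2m_0(s)/s}}ds},\qquad g_1(r)=g_0(r)+\frac{4\pi\,\delta p_1(r)\,r}{1-2m_0(r)/r},$$ $$\delta m(r)=\frac{4\pi r^3\,\delta\rho_c}{3[1+rg_1]^2}\exp\Bigl\{2\int_0^rg_1\frac{1-sg_1}{1+sg_1}ds\Bigr\},\qquad \delta p(r)=\delta p_1(r)-\frac{\delta m(r)}{4\pi r^3}\,\frac{1+8\pi[p_0+\delta p_1]r^2}{1-2m_0/r}.$$ Then, on any interval $[0,R')$ on which all denominators are positive and $1-2(m_0+\delta m)/r>0$, the pair $(\rho,p)$ with $m=m_0+\delta m$, $\rho=m'/(4\pi r^2)$, $p=p_0+\delta p$ solves the TOV system with regular centre, with central density $\rho_0(0)+\delta\rho_c$ and central pressure $p_0(0)+\delta p_c$, where $\delta p_c=\Delta p-\delta\rho_c/3$; the two parameters $\Delta p,\delta\rho_c$ are independent. *)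

theory Defs
  imports "HOL-Analysis.Analysis"
begin

text \<open>Geometrised units G = c = 1. Mass function of a density profile.\<close>
definition tov_mass :: "(real \<Rightarrow> real) \<Rightarrow> real \<Rightarrow> real" where
  "tov_mass \<rho> r = 4 * pi * integral {0..r} (\<lambda>s. s^2 * \<rho> s)"

definition tov_regular :: "real \<Rightarrow> (real \<Rightarrow> real) \<Rightarrow> (real \<Rightarrow> real) \<Rightarrow> bool" where
  "tov_regular R \<rho> p \<longleftrightarrow>
     continuous_on {0..<R} \<rho> \<and> continuous_on {0..<R} p \<and>
     (\<forall>r\<in>{0<..<R}. 1 - 2 * tov_mass \<rho> r / r > 0) \<and>
     (\<forall>r\<in>{0<..<R}. (p has_real_derivative
        - (\<rho> r + p r) * (tov_mass \<rho> r + 4 * pi * p r * r^3)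
          / (r^2 * (1 - 2 * tov_mass \<rho> r / r))) (at r))"

end

theory Submission
  imports Defs
begin

(* With the mass function m0 held fixed, the TOV equation is a Riccati equation for the pressure,
   so the difference dp1 of two of its solutions solves a Bernoulli equation.  Writing
   dp1 = w / q with w = Delta_p sqrt (1 - 2 m0/r) exp (-2 I0) and q' = 4 pi r w / (1 - 2 m0/r)
   linearises it, and (rho0, p0 + dp1) is again a regular solution.
   Next, shifting the mass by dm and the pressure by - dm (1 + 2 r g1) / (4 pi r^3) leaves the
   factor g = (m + 4 pi p r^3) / (r^2 (1 - 2 m/r)) of p' = - (rho + p) g unchanged, and the TOV
   equation of the new pair reduces to the linear equation
   dm' / dm = 3/r - 2 r (g1' + g1^2) / (1 + r g1), which the stated dm solves.  The centre stays
   regular because dm / (4 pi r^3 / 3) tends to the central density shift and r^2 g1' tends to 0. *)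

section \<open>Calculus on half-open intervals\<close>

lemma at_within_Ico_at_right:
  fixes a b :: real
  assumes "a < b"
  shows "at a within {a..<b} = at_right a"
  using assms by (intro at_within_nhd[of _ "{a - 1<..<b}"]) auto

lemma continuous_on_IcoI:
  fixes f :: "real \<Rightarrow> 'a::topological_space"
  assumes "continuous_on {a<..<b} f" and "(f \<longlongrightarrow> f a) (at_right a)"
  shows "continuous_on {a..<b} f"
  unfolding continuous_on_eq_continuous_within
proof
  fix x assume x: "x \<in> {a..<b}"
  show "continuous (at x within {a..<b}) f"
  proof (cases "x = a")
    case True
    with x assms(2) show ?thesis by (simp add: continuous_within at_within_Ico_at_right)
  next
    case False
    with x have "isCont f x"
      using assms(1) continuous_on_interior[of "{a<..<b}" f x] by auto
    then show ?thesis by (rule continuous_at_imp_continuous_at_within)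
  qed
qed

lemma continuous_on_Ico_at_rightD:
  fixes f :: "real \<Rightarrow> 'a::topological_space"
  assumes "a < b" and "continuous_on {a..<b} f"
  shows "(f \<longlongrightarrow> f a) (at_right a)"
proof -
  have "continuous (at a within {a..<b}) f"
    using assms continuous_on_eq_continuous_within[of "{a..<b}" f] by auto
  with assms(1) show ?thesis by (simp add: continuous_within at_within_Ico_at_right)
qed

lemma has_real_derivative_integral_Ico:
  assumes "continuous_on {a..<b} f" and "a < x" and "x < b"
  shows "((\<lambda>u. integral {a..u} f) has_real_derivative f x) (at x)"
proof -
  define c where "c = (x + b) / 2"
  have "continuous_on {a..c} f"
    using assms by (intro continuous_on_subset[OF assms(1)]) (auto simp: c_def)
  then have "((\<lambda>u. integral {a..u} f) has_real_derivative f x) (at x within {a..c})"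
    using assms by (intro integral_has_real_derivative) (auto simp: c_def)
  moreover have "at x within {a..c} = at x"
    using assms by (intro at_within_Icc_at) (auto simp: c_def)
  ultimately show ?thesis by simp
qed

lemma continuous_on_integral_Ico:
  fixes f :: "real \<Rightarrow> real"
  assumes "continuous_on {a..<b} f"
  shows "continuous_on {a..<b} (\<lambda>u. integral {a..u} f)"
proof (cases "a < b")
  case True
  show ?thesis
  proof (rule continuous_on_IcoI)
    show "continuous_on {a<..<b} (\<lambda>u. integral {a..u} f)"
      using has_real_derivative_integral_Ico[OF assms]
      by (intro DERIV_continuous_on[where D=f]) (auto intro: has_field_derivative_at_within)
    define c where "c = (a + b) / 2"
    have "a < c" using True by (simp add: c_def)
    have "continuous_on {a..c} f"
      using True by (intro continuous_on_subset[OF assms]) (auto simp: c_def)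
    then have "((\<lambda>u. integral {a..u} f) has_real_derivative f a) (at a within {a..c})"
      using \<open>a < c\<close> by (intro integral_has_real_derivative) auto
    then have "continuous (at a within {a..c}) (\<lambda>u. integral {a..u} f)"
      by (rule DERIV_continuous)
    with \<open>a < c\<close> show "((\<lambda>u. integral {a..u} f) \<longlongrightarrow> integral {a..a} f) (at_right a)"
      by (simp add: continuous_within at_within_Icc_at_right)
  qed
qed simp

section \<open>The TOV system\<close>

definition tov_gravity :: "real \<Rightarrow> real \<Rightarrow> real \<Rightarrow> real" where
  "tov_gravity m p r = (m + 4 * pi * p * r^3) / (r^2 * (1 - 2 * m / r))"

lemma tov_gravity_at_0 [simp]: "tov_gravity m p 0 = 0"
  by (simp add: tov_gravity_def)

lemma tov_regular_iff_gravity: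
  "tov_regular R \<rho> p \<longleftrightarrow> continuous_on {0..<R} \<rho> \<and> continuous_on {0..<R} p \<and>
     (\<forall>r\<in>{0<..<R}. 1 - 2 * tov_mass \<rho> r / r > 0) \<and>
     (\<forall>r\<in>{0<..<R}. (p has_real_derivative
        - (\<rho> r + p r) * tov_gravity (tov_mass \<rho> r) (p r) r) (at r))"
  by (simp add: tov_regular_def tov_gravity_def)

lemma tov_gravity_pressure_shift:
  "tov_gravity m (p + \<delta>) r = tov_gravity m p r + 4 * pi * \<delta> * r / (1 - 2 * m / r)"
proof (cases "r = 0")
  case False
  have "(m + 4 * pi * (p + \<delta>) * r^3) / (r^2 * b)
      = (m + 4 * pi * p * r^3) / (r^2 * b) + 4 * pi * \<delta> * r / b" for b
    using False by (cases "b = 0") (simp_all add: field_simps power2_eq_square power3_eq_cube)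
  then show ?thesis by (simp only: tov_gravity_def)
qed simp

lemma one_plus_tov_gravity:
  assumes "r \<noteq> 0" and "1 - 2 * m / r \<noteq> 0"
  shows "1 + 2 * r * tov_gravity m p r = (1 + 8 * pi * p * r^2) / (1 - 2 * m / r)"
  using assms by (simp add: tov_gravity_def field_simps power2_eq_square power3_eq_cube)

lemma tov_gravity_mass_shift:
  assumes r: "r \<noteq> 0" and b: "1 - 2 * m / r \<noteq> 0" and b': "1 - 2 * (m + \<delta>m) / r \<noteq> 0"
  shows "tov_gravity (m + \<delta>m) (p - \<delta>m * (1 + 2 * r * tov_gravity m p r) / (4 * pi * r^3)) r
    = tov_gravity m p r"
proof -
  define g where "g = tov_gravity m p r"
  have g: "m + 4 * pi * p * r^3 = g * (r^2 * (1 - 2 * m / r))"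
    using r b by (simp add: g_def tov_gravity_def)
  have "m + \<delta>m + 4 * pi * (p - \<delta>m * (1 + 2 * r * g) / (4 * pi * r^3)) * r^3
      = (m + 4 * pi * p * r^3) - 2 * r * g * \<delta>m"
    using r by (simp add: field_simps power3_eq_cube)
  also have "\<dots> = g * (r^2 * (1 - 2 * (m + \<delta>m) / r))"
    unfolding g using r by (simp add: field_simps power2_eq_square)
  finally have "m + \<delta>m + 4 * pi * (p - \<delta>m * (1 + 2 * r * g) / (4 * pi * r^3)) * r^3
      = g * (r^2 * (1 - 2 * (m + \<delta>m) / r))" .
  with r b' show ?thesis
    unfolding tov_gravity_def[of "m + \<delta>m"] g_def[symmetric] by simp
qed

lemma tov_mass_0 [simp]: "tov_mass \<rho> 0 = 0"
  by (simp add: tov_mass_def)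

lemma tov_mass_cong:
  assumes "\<And>s. s \<in> {0..r} \<Longrightarrow> \<rho>' s = \<rho> s"
  shows "tov_mass \<rho>' r = tov_mass \<rho> r"
  unfolding tov_mass_def
  by (rule arg_cong[where f="\<lambda>x. 4 * pi * x"], rule integral_cong) (simp add: assms)

lemma tov_mass_has_derivative:
  assumes "continuous_on {0..<R} \<rho>" and "0 < x" and "x < R"
  shows "(tov_mass \<rho> has_real_derivative 4 * pi * x^2 * \<rho> x) (at x)"
proof -
  have "continuous_on {0..<R} (\<lambda>s. s^2 * \<rho> s)"
    by (intro continuous_intros assms(1))
  from DERIV_cmult[OF has_real_derivative_integral_Ico[OF this assms(2,3)], of "4 * pi"]
  show ?thesis by (simp add: tov_mass_def[abs_def] mult.assoc)
qed

lemma continuous_on_tov_mass: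
  assumes "continuous_on {0..<R} \<rho>"
  shows "continuous_on {0..<R} (tov_mass \<rho>)"
proof -
  have "continuous_on {0..<R} (\<lambda>r. 4 * pi * integral {0..r} (\<lambda>s. s^2 * \<rho> s))"
    by (intro continuous_intros continuous_on_integral_Ico assms)
  then show ?thesis by (simp add: tov_mass_def[abs_def])
qed

lemma tov_mass_mean_density:
  assumes \<rho>: "continuous_on {0..<R} \<rho>" and R: "0 < R"
  shows "((\<lambda>r. tov_mass \<rho> r / r^3) \<longlongrightarrow> 4 * pi / 3 * \<rho> 0) (at_right 0)"
proof (rule lhopital_right_0[where f'="\<lambda>x. 4 * pi * x^2 * \<rho> x" and g'="\<lambda>x. 3 * x^2"])
  have near0: "\<forall>\<^sub>F x in at_right 0. 0 < x \<and> x < R"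
    unfolding eventually_at_right_field using R by (intro exI[of _ R]) auto
  show "(tov_mass \<rho> \<longlongrightarrow> 0) (at_right 0)"
    using continuous_on_Ico_at_rightD[OF R continuous_on_tov_mass[OF \<rho>]] by simp
  show "((\<lambda>r. r^3) \<longlongrightarrow> 0) (at_right (0::real))"
    by (intro tendsto_eq_intros) auto
  show "\<forall>\<^sub>F x in at_right 0. x ^ 3 \<noteq> (0::real)" "\<forall>\<^sub>F x in at_right 0. 3 * x ^ 2 \<noteq> (0::real)"
    using near0 by (eventually_elim, simp)+
  show "\<forall>\<^sub>F x in at_right 0. (tov_mass \<rho> has_real_derivative 4 * pi * x^2 * \<rho> x) (at x)"
    using near0 by eventually_elim (auto intro: tov_mass_has_derivative[OF \<rho>])
  show "\<forall>\<^sub>F x in at_right 0. ((\<lambda>r. r^3) has_real_derivative 3 * x^2) (at x)"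
    by (auto intro!: always_eventually derivative_eq_intros)
  have "((\<lambda>x. 4 * pi / 3 * \<rho> x) \<longlongrightarrow> 4 * pi / 3 * \<rho> 0) (at_right 0)"
    by (intro tendsto_intros continuous_on_Ico_at_rightD[OF R \<rho>])
  moreover have "\<forall>\<^sub>F x in at_right 0. 4 * pi / 3 * \<rho> x = 4 * pi * x^2 * \<rho> x / (3 * x^2)"
    using near0 by eventually_elim simp
  ultimately show "((\<lambda>x. 4 * pi * x^2 * \<rho> x / (3 * x^2)) \<longlongrightarrow> 4 * pi / 3 * \<rho> 0) (at_right 0)"
    by (rule Lim_transform_eventually)
qed

lemma tov_mass_eqI:
  assumes M: "continuous_on {0..<R} M" and "M 0 = 0"
    and dM: "\<And>x. 0 < x \<Longrightarrow> x < R \<Longrightarrow> (M has_real_derivative 4 * pi * x^2 * \<rho> x) (at x)"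
    and r: "0 \<le> r" "r < R"
  shows "tov_mass \<rho> r = M r"
proof -
  have "((\<lambda>s. s^2 * \<rho> s) has_integral (M r / (4 * pi) - M 0 / (4 * pi))) {0..r}"
  proof (rule fundamental_theorem_of_calculus_interior[OF r(1)])
    show "continuous_on {0..r} (\<lambda>s. M s / (4 * pi))"
      using r by (intro continuous_intros continuous_on_subset[OF M]) auto
    fix s assume "s \<in> {0<..<r}"
    with r have "(M has_real_derivative 4 * pi * s^2 * \<rho> s) (at s)" by (intro dM) auto
    from DERIV_cdivide[OF this, of "4 * pi"]
    show "((\<lambda>s. M s / (4 * pi)) has_vector_derivative s^2 * \<rho> s) (at s)"
      by (simp add: has_real_derivative_iff_has_vector_derivative)
  qed
  with \<open>M 0 = 0\<close> show ?thesis by (simp add: tov_mass_def integral_unique)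
qed

text \<open>At the centre the formula reads \<open>1 - 2 * m 0 / 0 = 1\<close> (division by zero yields zero),
  which is also its limit.\<close>
lemma continuous_on_tov_metric:
  assumes \<rho>: "continuous_on {0..<R} \<rho>"
  shows "continuous_on {0..<R} (\<lambda>r. 1 - 2 * tov_mass \<rho> r / r)"
proof (cases "0 < R")
  case True
  have "((\<lambda>r. 1 - 2 * (tov_mass \<rho> r / r^3 * r^2)) \<longlongrightarrow> 1 - 2 * (4 * pi / 3 * \<rho> 0 * 0^2)) (at_right 0)"
    by (intro tendsto_intros tov_mass_mean_density[OF \<rho> True])
  moreover have "\<forall>\<^sub>F r in at_right 0. 1 - 2 * (tov_mass \<rho> r / r^3 * r^2) = 1 - 2 * tov_mass \<rho> r / r"
    using eventually_at_right_less[of 0]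
    by eventually_elim (simp add: power2_eq_square power3_eq_cube)
  ultimately have lim: "((\<lambda>r. 1 - 2 * tov_mass \<rho> r / r) \<longlongrightarrow> 1 - 2 * (4 * pi / 3 * \<rho> 0 * 0^2)) (at_right 0)"
    by (rule Lim_transform_eventually)
  show ?thesis
  proof (rule continuous_on_IcoI)
    show "continuous_on {0<..<R} (\<lambda>r. 1 - 2 * tov_mass \<rho> r / r)"
      by (intro continuous_intros continuous_on_subset[OF continuous_on_tov_mass[OF \<rho>]]) auto
    show "((\<lambda>r. 1 - 2 * tov_mass \<rho> r / r) \<longlongrightarrow> 1 - 2 * tov_mass \<rho> 0 / 0) (at_right 0)"
      using lim by simp
  qed
qed simp

lemma tov_regular_metric_pos:
  assumes "tov_regular R \<rho> p" and "r \<in> {0..<R}"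
  shows "1 - 2 * tov_mass \<rho> r / r > 0"
  using assms by (cases "r = 0") (auto simp: tov_regular_def)

lemma tov_gravity_tendsto_centre:
  assumes tov: "tov_regular R \<rho> p" and R: "0 < R"
  shows "((\<lambda>r. tov_gravity (tov_mass \<rho> r) (p r) r) \<longlongrightarrow> 0) (at_right 0)"
proof -
  from tov have \<rho>: "continuous_on {0..<R} \<rho>" and p: "continuous_on {0..<R} p"
    by (auto simp: tov_regular_def)
  have "((\<lambda>r. 1 - 2 * tov_mass \<rho> r / r) \<longlongrightarrow> 1) (at_right 0)"
    using continuous_on_Ico_at_rightD[OF R continuous_on_tov_metric[OF \<rho>]] by simp
  then have "((\<lambda>r. r * (tov_mass \<rho> r / r^3 + 4 * pi * p r) / (1 - 2 * tov_mass \<rho> r / r))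
      \<longlongrightarrow> 0 * (4 * pi / 3 * \<rho> 0 + 4 * pi * p 0) / 1) (at_right 0)"
    by (intro tendsto_intros tov_mass_mean_density[OF \<rho> R] continuous_on_Ico_at_rightD[OF R p]) auto
  moreover have "\<forall>\<^sub>F r in at_right 0. r * (tov_mass \<rho> r / r^3 + 4 * pi * p r) / (1 - 2 * tov_mass \<rho> r / r)
      = tov_gravity (tov_mass \<rho> r) (p r) r"
    using eventually_at_right_less[of 0]
  proof eventually_elim
    case (elim r)
    then have "r * (tov_mass \<rho> r / r^3 + 4 * pi * p r) = (tov_mass \<rho> r + 4 * pi * p r * r^3) / r^2"
      by (simp add: field_simps power2_eq_square power3_eq_cube)
    then show ?case
      by (simp add: tov_gravity_def)
  qed
  ultimately show ?thesis
    using Lim_transform_eventually by fastforce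
qed

lemma continuous_on_tov_gravity:
  assumes tov: "tov_regular R \<rho> p"
  shows "continuous_on {0..<R} (\<lambda>r. tov_gravity (tov_mass \<rho> r) (p r) r)"
proof (cases "0 < R")
  case True
  from tov have \<rho>: "continuous_on {0..<R} \<rho>" and p: "continuous_on {0..<R} p"
    by (auto simp: tov_regular_def)
  have nz: "\<forall>r\<in>{0<..<R}. r^2 * (1 - 2 * tov_mass \<rho> r / r) \<noteq> 0"
  proof
    fix r assume "r \<in> {0<..<R}"
    with tov_regular_metric_pos[OF tov, of r] show "r^2 * (1 - 2 * tov_mass \<rho> r / r) \<noteq> 0"
      by auto
  qed
  show ?thesis
  proof (rule continuous_on_IcoI)
    show "continuous_on {0<..<R} (\<lambda>r. tov_gravity (tov_mass \<rho> r) (p r) r)"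
      unfolding tov_gravity_def
      by (intro continuous_intros continuous_on_subset[OF continuous_on_tov_mass[OF \<rho>]]
          continuous_on_subset[OF p]) (use nz in auto)
    show "((\<lambda>r. tov_gravity (tov_mass \<rho> r) (p r) r) \<longlongrightarrow> tov_gravity (tov_mass \<rho> 0) (p 0) 0)
        (at_right 0)"
      using tov_gravity_tendsto_centre[OF tov True] by simp
  qed
qed simp

lemma tov_regular_transform:
  assumes tov: "tov_regular R \<rho> p"
    and \<rho>': "\<And>r. r \<in> {0..<R} \<Longrightarrow> \<rho>' r = \<rho> r" and p': "\<And>r. r \<in> {0..<R} \<Longrightarrow> p' r = p r"
  shows "tov_regular R \<rho>' p'"
  unfolding tov_regular_iff_gravity
proof (intro conjI ballI)
  have m: "tov_mass \<rho>' r = tov_mass \<rho> r" if "r \<in> {0..<R}" for r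
    using that by (intro tov_mass_cong \<rho>') auto
  show "continuous_on {0..<R} \<rho>'"
    by (rule continuous_on_eq[of _ \<rho>]) (use tov \<rho>' in \<open>auto simp: tov_regular_def\<close>)
  show "continuous_on {0..<R} p'"
    by (rule continuous_on_eq[of _ p]) (use tov p' in \<open>auto simp: tov_regular_def\<close>)
  fix r assume r: "r \<in> {0<..<R}"
  then have r': "r \<in> {0..<R}" by auto
  show "1 - 2 * tov_mass \<rho>' r / r > 0"
    using tov r by (auto simp: tov_regular_def m[OF r'])
  have "(p has_real_derivative - (\<rho>' r + p' r) * tov_gravity (tov_mass \<rho>' r) (p' r) r) (at r)"
    using tov r by (simp add: tov_regular_iff_gravity \<rho>'[OF r'] p'[OF r'] m[OF r'])
  then show "(p' has_real_derivative - (\<rho>' r + p' r) * tov_gravity (tov_mass \<rho>' r) (p' r) r) (at r)"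
    by (rule has_field_derivative_transform_within_open[where S="{0<..<R}"]) (use r p' in auto)
qed

lemma tov_metric_has_derivative:
  assumes "x \<noteq> 0" and "(m has_real_derivative 4 * pi * x^2 * \<rho>) (at x)"
  shows "((\<lambda>r. 1 - 2 * m r / r) has_real_derivative 2 * (m x / x^2 - 4 * pi * x * \<rho>)) (at x)"
  using DERIV_diff[OF DERIV_const DERIV_divide[OF DERIV_cmult[OF assms(2)] DERIV_ident assms(1)]]
  by (rule DERIV_cong) (use assms(1) in \<open>simp add: field_simps power2_eq_square\<close>)

lemma tov_gravity_has_derivative:
  assumes x: "x \<noteq> 0" and b: "1 - 2 * m x / x \<noteq> 0"
    and dm: "(m has_real_derivative 4 * pi * x^2 * \<rho>) (at x)"
    and dp: "(p has_real_derivative - (\<rho> + p x) * g) (at x)"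
    and g: "g = tov_gravity (m x) (p x) x"
  shows "((\<lambda>r. tov_gravity (m r) (p r) r) has_real_derivative
     (4 * pi * x^2 * (\<rho> + 3 * p x) - 4 * pi * x^3 * (\<rho> + p x) * g
       - g * (2 * x - 2 * m x - 8 * pi * x^3 * \<rho>)) / (x^2 * (1 - 2 * m x / x))) (at x)"
proof -
  define D where "D = (\<lambda>r. r^2 * (1 - 2 * m r / r))"
  have "D x \<noteq> 0" using x b by (simp add: D_def)
  have "((\<lambda>r. r^2) has_real_derivative 2 * x) (at x)"
    by (auto intro!: derivative_eq_intros)
  from DERIV_mult[OF this tov_metric_has_derivative[OF x dm]]
  have dD: "(D has_real_derivative 2 * x - 2 * m x - 8 * pi * x^3 * \<rho>) (at x)"
    unfolding D_def
    by (rule DERIV_cong) (use x in \<open>simp add: field_simps power2_eq_square power3_eq_cube\<close>)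
  have dN: "((\<lambda>r. m r + 4 * pi * p r * r^3) has_real_derivative
      4 * pi * x^2 * (\<rho> + 3 * p x) - 4 * pi * x^3 * (\<rho> + p x) * g) (at x)"
    by (auto intro!: derivative_eq_intros dm dp simp: field_simps power2_eq_square power3_eq_cube)
  have g': "g = (m x + 4 * pi * p x * x^3) / D x"
    by (simp add: g tov_gravity_def D_def)
  have f: "(\<lambda>r. tov_gravity (m r) (p r) r) = (\<lambda>r. (m r + 4 * pi * p r * r^3) / D r)"
    by (simp add: tov_gravity_def D_def)
  have den: "x^2 * (1 - 2 * m x / x) = D x"
    by (simp add: D_def)
  show ?thesis
    unfolding f den using DERIV_divide[OF dN dD \<open>D x \<noteq> 0\<close>]
    by (rule DERIV_cong) (use \<open>D x \<noteq> 0\<close> in \<open>simp add: g' field_simps\<close>)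
qed

section \<open>Perturbing the pressure at fixed mass\<close>

lemma bernoulli_quotient_has_derivative:
  assumes "(w has_real_derivative a * w x) (at x)" and "(q has_real_derivative \<beta> * w x) (at x)"
    and "q x \<noteq> 0"
  shows "((\<lambda>r. w r / q r) has_real_derivative a * (w x / q x) - \<beta> * (w x / q x)^2) (at x)"
  using DERIV_divide[OF assms]
  by (rule DERIV_cong) (use assms(3) in \<open>simp add: field_simps power2_eq_square\<close>)

lemma tov_pressure_shift_has_derivative:
  assumes "(p has_real_derivative - (\<rho> + p x) * tov_gravity m (p x) x) (at x)"
    and "(\<delta> has_real_derivative
      - \<delta> x * (tov_gravity m (p x) x + 4 * pi * x * (\<rho> + p x + \<delta> x) / (1 - 2 * m / x))) (at x)"
  shows "((\<lambda>r. p r + \<delta> r) has_real_derivative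
    - (\<rho> + (p x + \<delta> x)) * tov_gravity m (p x + \<delta> x) x) (at x)"
  using DERIV_add[OF assms]
  by (rule DERIV_cong)
    (simp only: tov_gravity_pressure_shift[of m "p x" "\<delta> x" x], simp add: divide_inverse algebra_simps)

lemma tov_pressure_perturbation_has_derivative:
  assumes x: "x \<noteq> 0" and b: "1 - 2 * m x / x > 0"
    and dm: "(m has_real_derivative 4 * pi * x^2 * \<rho>) (at x)"
    and dp: "(p has_real_derivative - (\<rho> + p x) * tov_gravity (m x) (p x) x) (at x)"
    and dI: "(I has_real_derivative tov_gravity (m x) (p x) x) (at x)"
    and dK: "(K has_real_derivative x * exp (- 2 * I x) / sqrt (1 - 2 * m x / x)) (at x)"
    and q: "1 + 4 * pi * \<Delta>p * K x \<noteq> 0"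
    and \<delta>_def: "\<delta> = (\<lambda>r. \<Delta>p * sqrt (1 - 2 * m r / r) * exp (- 2 * I r) / (1 + 4 * pi * \<Delta>p * K r))"
  shows "((\<lambda>r. p r + \<delta> r) has_real_derivative
    - (\<rho> + (p x + \<delta> x)) * tov_gravity (m x) (p x + \<delta> x) x) (at x)"
proof -
  define g where "g = tov_gravity (m x) (p x) x"
  define s where "s = sqrt (1 - 2 * m x / x)"
  have s: "0 < s" "1 - 2 * m x / x = s^2"
    using b by (simp_all add: s_def real_sqrt_pow2 less_imp_le)
  have sqrt_s: "sqrt (s^2) = s"
    using s(1) by simp
  note metric_s = s(2) sqrt_s
  have g_eq: "g = (m x + 4 * pi * p x * x^3) / (x^2 * s^2)"
    by (simp only: g_def tov_gravity_def s(2))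
  have ds: "((\<lambda>r. sqrt (1 - 2 * m r / r)) has_real_derivative
      inverse s / 2 * (2 * (m x / x^2 - 4 * pi * x * \<rho>))) (at x)"
    unfolding s_def by (rule DERIV_chain2[OF DERIV_real_sqrt[OF b] tov_metric_has_derivative[OF x dm]])
  have dE: "((\<lambda>r. exp (- 2 * I r)) has_real_derivative - 2 * g * exp (- 2 * I x)) (at x)"
    by (auto intro!: derivative_eq_intros dI simp: g_def)
  have dw: "((\<lambda>r. \<Delta>p * sqrt (1 - 2 * m r / r) * exp (- 2 * I r)) has_real_derivative
      (- g - 4 * pi * x * (\<rho> + p x) / s^2) * (\<Delta>p * sqrt (1 - 2 * m x / x) * exp (- 2 * I x))) (at x)"
    by (rule DERIV_cong[OF DERIV_mult[OF DERIV_cmult[OF ds] dE]])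
      (simp only: metric_s, use x s(1) in \<open>simp add: g_eq field_simps power2_eq_square power3_eq_cube\<close>)
  have "((\<lambda>r. 1 + 4 * pi * \<Delta>p * K r) has_real_derivative
      0 + 4 * pi * \<Delta>p * (x * exp (- 2 * I x) / sqrt (1 - 2 * m x / x))) (at x)"
    by (intro DERIV_add DERIV_const DERIV_cmult dK)
  then have dq: "((\<lambda>r. 1 + 4 * pi * \<Delta>p * K r) has_real_derivative
      4 * pi * x / s^2 * (\<Delta>p * sqrt (1 - 2 * m x / x) * exp (- 2 * I x))) (at x)"
    by (rule DERIV_cong) (simp only: metric_s, use s(1) in \<open>simp add: field_simps power2_eq_square\<close>)
  have "(\<delta> has_real_derivative
      (- g - 4 * pi * x * (\<rho> + p x) / s^2) * \<delta> x - 4 * pi * x / s^2 * (\<delta> x)^2) (at x)"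
    using bernoulli_quotient_has_derivative[OF dw dq q] unfolding \<delta>_def .
  then have "(\<delta> has_real_derivative
      - \<delta> x * (g + 4 * pi * x * (\<rho> + p x + \<delta> x) / (1 - 2 * m x / x))) (at x)"
    by (rule DERIV_cong) (simp only: s(2), use s(1) in \<open>simp add: field_simps power2_eq_square\<close>)
  from tov_pressure_shift_has_derivative[OF dp this[unfolded g_def]] show ?thesis .
qed

lemma tov_pressure_perturbation:
  fixes \<rho> p I \<delta>p :: "real \<Rightarrow> real" and R R' \<Delta>p :: real
  assumes tov: "tov_regular R \<rho> p" and R': "R' \<le> R"
    and I_def: "I = (\<lambda>r. integral {0..r} (\<lambda>s. tov_gravity (tov_mass \<rho> s) (p s) s))"
    and \<delta>p_def: "\<delta>p = (\<lambda>r. \<Delta>p * sqrt (1 - 2 * tov_mass \<rho> r / r) * exp (- 2 * I r)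
          / (1 + 4 * pi * \<Delta>p
            * integral {0..r} (\<lambda>s. s * exp (- 2 * I s) / sqrt (1 - 2 * tov_mass \<rho> s / s))))"
    and pos: "\<forall>r\<in>{0..<R'}. 1 + 4 * pi * \<Delta>p
          * integral {0..r} (\<lambda>s. s * exp (- 2 * I s) / sqrt (1 - 2 * tov_mass \<rho> s / s)) > 0"
  shows "tov_regular R' \<rho> (\<lambda>r. p r + \<delta>p r)"
proof -
  define b where "b = (\<lambda>r. 1 - 2 * tov_mass \<rho> r / r)"
  define K where "K = (\<lambda>r. integral {0..r} (\<lambda>s. s * exp (- 2 * I s) / sqrt (b s)))"
  from tov have \<rho>: "continuous_on {0..<R} \<rho>" and p: "continuous_on {0..<R} p"
    by (auto simp: tov_regular_def)
  have b: "continuous_on {0..<R} b"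
    unfolding b_def by (rule continuous_on_tov_metric[OF \<rho>])
  have bpos: "b r > 0" if "r \<in> {0..<R}" for r
    using tov_regular_metric_pos[OF tov that] by (simp add: b_def)
  have I: "continuous_on {0..<R} I"
    unfolding I_def by (rule continuous_on_integral_Ico[OF continuous_on_tov_gravity[OF tov]])
  have k: "continuous_on {0..<R} (\<lambda>s. s * exp (- 2 * I s) / sqrt (b s))"
    by (intro continuous_intros I b) (auto dest: bpos)
  have K: "continuous_on {0..<R} K"
    unfolding K_def by (rule continuous_on_integral_Ico[OF k])
  have q: "1 + 4 * pi * \<Delta>p * K r > 0" if "r \<in> {0..<R'}" for r
    using pos that by (simp add: K_def b_def)
  have \<delta>p: "\<delta>p = (\<lambda>r. \<Delta>p * sqrt (b r) * exp (- 2 * I r) / (1 + 4 * pi * \<Delta>p * K r))"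
    by (simp add: \<delta>p_def K_def b_def)
  have sub: "{0..<R'} \<subseteq> {0..<R}"
    using R' by auto
  show ?thesis
    unfolding tov_regular_iff_gravity
  proof (intro conjI ballI)
    show "continuous_on {0..<R'} \<rho>"
      using \<rho> sub by (rule continuous_on_subset)
    show "continuous_on {0..<R'} (\<lambda>r. p r + \<delta>p r)"
      unfolding \<delta>p
      by (intro continuous_intros continuous_on_subset[OF p sub] continuous_on_subset[OF b sub]
          continuous_on_subset[OF I sub] continuous_on_subset[OF K sub]) (auto dest: q)
    fix x assume "x \<in> {0<..<R'}"
    then have x: "0 < x" "x < R" "x \<in> {0..<R'}"
      using R' by auto
    show "1 - 2 * tov_mass \<rho> x / x > 0"
      using bpos[of x] x by (simp add: b_def)
    show "((\<lambda>r. p r + \<delta>p r) has_real_derivative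
        - (\<rho> x + (p x + \<delta>p x)) * tov_gravity (tov_mass \<rho> x) (p x + \<delta>p x) x) (at x)"
    proof (rule tov_pressure_perturbation_has_derivative[where m="tov_mass \<rho>" and I=I and K=K])
      show "x \<noteq> 0" "1 - 2 * tov_mass \<rho> x / x > 0"
        using x bpos[of x] by (auto simp: b_def)
      show "(tov_mass \<rho> has_real_derivative 4 * pi * x^2 * \<rho> x) (at x)"
        by (rule tov_mass_has_derivative[OF \<rho> x(1,2)])
      show "(p has_real_derivative - (\<rho> x + p x) * tov_gravity (tov_mass \<rho> x) (p x) x) (at x)"
        using tov x by (simp add: tov_regular_iff_gravity)
      show "(I has_real_derivative tov_gravity (tov_mass \<rho> x) (p x) x) (at x)"
        unfolding I_def
        by (rule has_real_derivative_integral_Ico[OF continuous_on_tov_gravity[OF tov] x(1,2)])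
      show "(K has_real_derivative x * exp (- 2 * I x) / sqrt (1 - 2 * tov_mass \<rho> x / x)) (at x)"
        using has_real_derivative_integral_Ico[OF k x(1,2)] by (simp add: K_def b_def)
      show "1 + 4 * pi * \<Delta>p * K x \<noteq> 0"
        using q[OF x(3)] by simp
      show "\<delta>p = (\<lambda>r. \<Delta>p * sqrt (1 - 2 * tov_mass \<rho> r / r) * exp (- 2 * I r)
          / (1 + 4 * pi * \<Delta>p * K r))"
        by (simp add: \<delta>p b_def)
    qed
  qed
qed

section \<open>Perturbing the mass\<close>

lemma mass_perturbation_has_derivative:
  assumes x: "x \<noteq> 0" and reg: "1 + x * g x \<noteq> 0"
    and dg: "(g has_real_derivative G) (at x)"
    and dJ: "(J has_real_derivative g x * (1 - x * g x) / (1 + x * g x)) (at x)"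
  shows "((\<lambda>r. r^3 * exp (2 * J r) / (1 + r * g r)^2) has_real_derivative
    x^2 * exp (2 * J x) / (1 + x * g x)^2
      * (3 * (1 + x * g x) - 2 * x^2 * (G + (g x)^2)) / (1 + x * g x)) (at x)"
proof -
  define u where "u = 1 + x * g x"
  have "u \<noteq> 0" and gx: "g x = (u - 1) / x"
    using x reg by (simp_all add: u_def)
  have d1: "((\<lambda>r. r^3) has_real_derivative 3 * x^2) (at x)"
    by (auto intro!: derivative_eq_intros)
  have d2: "((\<lambda>r. exp (2 * J r)) has_real_derivative
      exp (2 * J x) * (2 * (g x * (1 - x * g x) / (1 + x * g x)))) (at x)"
    by (auto intro!: derivative_eq_intros dJ)
  have d3: "((\<lambda>r. (1 + r * g r)^2) has_real_derivative 2 * (1 + x * g x) * (g x + x * G)) (at x)"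
    by (auto intro!: derivative_eq_intros dg simp: algebra_simps)
  have "(1 + x * g x)^2 \<noteq> 0"
    using reg by simp
  from DERIV_divide[OF DERIV_mult[OF d1 d2] d3 this] show ?thesis
    by (rule DERIV_cong) (simp only: u_def[symmetric], simp only: gx,
      use x \<open>u \<noteq> 0\<close> in \<open>simp add: field_simps power2_eq_square power3_eq_cube\<close>)
qed

lemma mass_shift_pressure_has_derivative:
  assumes x: "x \<noteq> 0" and reg: "1 + x * g x \<noteq> 0"
    and dp: "(p has_real_derivative - (\<rho> + p x) * g x) (at x)"
    and dg: "(g has_real_derivative G) (at x)"
    and dm: "(\<delta>m has_real_derivative D) (at x)"
    and D: "D = \<delta>m x * (3 * (1 + x * g x) - 2 * x^2 * (G + (g x)^2)) / (x * (1 + x * g x))"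
  shows "((\<lambda>r. p r - \<delta>m r * (1 + 2 * r * g r) / (4 * pi * r^3)) has_real_derivative
    - (\<rho> + D / (4 * pi * x^2) + (p x - \<delta>m x * (1 + 2 * x * g x) / (4 * pi * x^3))) * g x) (at x)"
proof -
  define u where "u = 1 + x * g x"
  have "u \<noteq> 0" and gx: "g x = (u - 1) / x"
    using x reg by (simp_all add: u_def)
  have d1: "((\<lambda>r. 1 + 2 * r * g r) has_real_derivative 2 * g x + 2 * x * G) (at x)"
    by (auto intro!: derivative_eq_intros dg simp: algebra_simps)
  have d2: "((\<lambda>r. 4 * pi * r^3) has_real_derivative 12 * pi * x^2) (at x)"
    by (auto intro!: derivative_eq_intros)
  have nz: "4 * pi * x^3 \<noteq> 0"
    using x by simp
  from DERIV_diff[OF dp DERIV_divide[OF DERIV_mult[OF dm d1] d2 nz]] show ?thesis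
    by (rule DERIV_cong) (simp only: D u_def[symmetric], simp only: gx,
      use x \<open>u \<noteq> 0\<close> in \<open>simp add: field_simps power2_eq_square power3_eq_cube\<close>)
qed

locale tov_mass_perturbation =
  fixes R \<delta>\<rho>c :: real and \<rho>1 p1 g \<delta>m :: "real \<Rightarrow> real"
  assumes tov: "tov_regular R \<rho>1 p1"
    and g_def: "g = (\<lambda>r. tov_gravity (tov_mass \<rho>1 r) (p1 r) r)"
    and \<delta>m_def: "\<delta>m = (\<lambda>r. 4 * pi * r^3 * \<delta>\<rho>c / (3 * (1 + r * g r)^2)
          * exp (2 * integral {0..r} (\<lambda>s. g s * (1 - s * g s) / (1 + s * g s))))"
    and regular: "\<forall>r\<in>{0..<R}. 1 + r * g r > 0"
begin

lemma background_continuous: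
  shows "continuous_on {0..<R} \<rho>1" and "continuous_on {0..<R} p1"
    and "continuous_on {0..<R} (tov_mass \<rho>1)"
    and "continuous_on {0..<R} (\<lambda>r. 1 - 2 * tov_mass \<rho>1 r / r)"
    and "continuous_on {0..<R} g"
proof -
  show \<rho>1: "continuous_on {0..<R} \<rho>1" and "continuous_on {0..<R} p1"
    using tov by (auto simp: tov_regular_def)
  show "continuous_on {0..<R} (tov_mass \<rho>1)"
    by (rule continuous_on_tov_mass[OF \<rho>1])
  show "continuous_on {0..<R} (\<lambda>r. 1 - 2 * tov_mass \<rho>1 r / r)"
    by (rule continuous_on_tov_metric[OF \<rho>1])
  show "continuous_on {0..<R} g"
    unfolding g_def by (rule continuous_on_tov_gravity[OF tov])
qed

lemma gravity_0: "g 0 = 0"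
  by (simp add: g_def)

lemma regular_nonzero: "r \<in> {0..<R} \<Longrightarrow> 1 + r * g r \<noteq> 0"
  using regular by fastforce

lemma metric_nonzero: "r \<in> {0..<R} \<Longrightarrow> 1 - 2 * tov_mass \<rho>1 r / r \<noteq> 0"
  using tov_regular_metric_pos[OF tov] by fastforce

definition mass_exponent :: "real \<Rightarrow> real" where
  "mass_exponent r = integral {0..r} (\<lambda>s. g s * (1 - s * g s) / (1 + s * g s))"

lemma mass_exponent:
  shows "continuous_on {0..<R} mass_exponent"
    and "\<And>x. 0 < x \<Longrightarrow> x < R \<Longrightarrow>
      (mass_exponent has_real_derivative g x * (1 - x * g x) / (1 + x * g x)) (at x)"
proof -
  have h: "continuous_on {0..<R} (\<lambda>s. g s * (1 - s * g s) / (1 + s * g s))"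
    by (intro continuous_intros background_continuous(5) ballI regular_nonzero)
  show "continuous_on {0..<R} mass_exponent"
    unfolding mass_exponent_def[abs_def] by (rule continuous_on_integral_Ico[OF h])
  show "(mass_exponent has_real_derivative g x * (1 - x * g x) / (1 + x * g x)) (at x)"
    if "0 < x" "x < R" for x
    unfolding mass_exponent_def[abs_def] by (rule has_real_derivative_integral_Ico[OF h that])
qed

text \<open>The mean density \<open>\<delta>m r / (4 pi r^3 / 3)\<close> of the mass perturbation; it equals
  \<open>\<delta>\<rho>c\<close> at the centre.\<close>
definition mean_density_shift :: "real \<Rightarrow> real" where
  "mean_density_shift r = \<delta>\<rho>c * exp (2 * mass_exponent r) / (1 + r * g r)^2"

lemma continuous_on_mean_density_shift: "continuous_on {0..<R} mean_density_shift"
  unfolding mean_density_shift_def[abs_def]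
  by (intro continuous_intros mass_exponent(1) background_continuous(5) ballI) (simp add: regular_nonzero)

lemma mass_shift_eq_mean_density: "\<delta>m = (\<lambda>r. 4 * pi / 3 * r^3 * mean_density_shift r)"
  by (simp add: fun_eq_iff \<delta>m_def mean_density_shift_def mass_exponent_def mult_ac)

text \<open>\<open>r^2 g'(r)\<close>, which unlike \<open>g'\<close> is continuous at the centre.\<close>
definition gravity_slope :: "real \<Rightarrow> real" where
  "gravity_slope r = (4 * pi * r^2 * (\<rho>1 r + 3 * p1 r) - 4 * pi * r^3 * (\<rho>1 r + p1 r) * g r
      - g r * (2 * r - 2 * tov_mass \<rho>1 r - 8 * pi * r^3 * \<rho>1 r)) / (1 - 2 * tov_mass \<rho>1 r / r)"

lemma continuous_on_gravity_slope: "continuous_on {0..<R} gravity_slope"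
  unfolding gravity_slope_def[abs_def]
  by (intro continuous_intros background_continuous(1-5) ballI metric_nonzero)

lemma gravity_has_derivative:
  assumes "0 < x" and "x < R"
  shows "(g has_real_derivative gravity_slope x / x^2) (at x)"
proof -
  have x: "x \<noteq> 0" and b: "1 - 2 * tov_mass \<rho>1 x / x \<noteq> 0"
    using assms metric_nonzero[of x] by auto
  have dm: "(tov_mass \<rho>1 has_real_derivative 4 * pi * x^2 * \<rho>1 x) (at x)"
    by (rule tov_mass_has_derivative[OF background_continuous(1) assms])
  have dp: "(p1 has_real_derivative - (\<rho>1 x + p1 x) * g x) (at x)"
    using tov assms by (simp add: tov_regular_iff_gravity g_def)
  have gx: "g x = tov_gravity (tov_mass \<rho>1 x) (p1 x) x"
    by (simp add: g_def)
  from tov_gravity_has_derivative[OF x b dm dp gx] show ?thesis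
    unfolding g_def[symmetric] gravity_slope_def by (simp add: mult.commute)
qed

text \<open>Forms of \<open>\<rho>1 + \<delta>m' / (4 pi r^2)\<close> and
  \<open>p1 - \<delta>m (1 + 8 pi p1 r^2) / (4 pi r^3 (1 - 2 m1 / r))\<close> that are continuous at the centre.\<close>
definition density :: "real \<Rightarrow> real" where
  "density r = \<rho>1 r + mean_density_shift r
     * (3 * (1 + r * g r) - 2 * (gravity_slope r + (r * g r)^2)) / (1 + r * g r) / 3"

definition pressure :: "real \<Rightarrow> real" where
  "pressure r = p1 r - mean_density_shift r / 3 * (1 + 8 * pi * p1 r * r^2)
     / (1 - 2 * tov_mass \<rho>1 r / r)"

lemma continuous_on_density: "continuous_on {0..<R} density"
proof -
  have "continuous_on {0..<R} (\<lambda>r. mean_density_shift r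
      * (3 * (1 + r * g r) - 2 * (gravity_slope r + (r * g r)^2)) / (1 + r * g r))"
    by (intro continuous_intros background_continuous(5) continuous_on_mean_density_shift
        continuous_on_gravity_slope ballI regular_nonzero)
  then have "continuous_on {0..<R} (\<lambda>r. mean_density_shift r
      * (3 * (1 + r * g r) - 2 * (gravity_slope r + (r * g r)^2)) / (1 + r * g r) / 3)"
    by (rule continuous_on_divide[OF _ continuous_on_const]) simp_all
  then show ?thesis
    unfolding density_def[abs_def] by (rule continuous_on_add[OF background_continuous(1)])
qed

lemma continuous_on_pressure: "continuous_on {0..<R} pressure"
proof -
  have "continuous_on {0..<R} (\<lambda>r. mean_density_shift r / 3 * (1 + 8 * pi * p1 r * r^2))"
    by (intro continuous_intros background_continuous(2) continuous_on_mean_density_shift) simp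
  then have "continuous_on {0..<R} (\<lambda>r. mean_density_shift r / 3 * (1 + 8 * pi * p1 r * r^2)
      / (1 - 2 * tov_mass \<rho>1 r / r))"
    by (rule continuous_on_divide[OF _ background_continuous(4)]) (use metric_nonzero in blast)
  then show ?thesis
    unfolding pressure_def[abs_def] by (rule continuous_on_diff[OF background_continuous(2)])
qed

lemma perturbed_mass_has_derivative:
  assumes "0 < x" and "x < R"
  shows "((\<lambda>r. tov_mass \<rho>1 r + \<delta>m r) has_real_derivative 4 * pi * x^2 * density x) (at x)"
proof -
  have x: "x \<noteq> 0" and reg: "1 + x * g x \<noteq> 0"
    using assms regular_nonzero[of x] by auto
  define u where "u = 1 + x * g x"
  have "u \<noteq> 0"
    using reg by (simp add: u_def)
  have \<delta>m: "\<delta>m = (\<lambda>r. 4 * pi / 3 * \<delta>\<rho>c * (r^3 * exp (2 * mass_exponent r) / (1 + r * g r)^2))"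
    by (simp add: mass_shift_eq_mean_density mean_density_shift_def fun_eq_iff mult_ac)
  have d: "(\<delta>m has_real_derivative 4 * pi / 3 * \<delta>\<rho>c * (x^2 * exp (2 * mass_exponent x) / (1 + x * g x)^2
      * (3 * (1 + x * g x) - 2 * x^2 * (gravity_slope x / x^2 + (g x)^2)) / (1 + x * g x))) (at x)"
    unfolding \<delta>m
    by (intro DERIV_cmult mass_perturbation_has_derivative x reg gravity_has_derivative
        mass_exponent(2) assms)
  have W: "2 * x^2 * (gravity_slope x / x^2 + (g x)^2) = 2 * (gravity_slope x + (x * g x)^2)"
    using x by (simp add: field_simps power2_eq_square)
  from d have "(\<delta>m has_real_derivative 4 * pi / 3 * \<delta>\<rho>c * (x^2 * exp (2 * mass_exponent x) / u^2
      * (3 * u - 2 * (gravity_slope x + (x * g x)^2)) / u)) (at x)"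
    by (rule DERIV_cong) (simp only: u_def W)
  from DERIV_add[OF tov_mass_has_derivative[OF background_continuous(1) assms] this] show ?thesis
    by (rule DERIV_cong) (simp only: density_def mean_density_shift_def u_def[symmetric],
      use x \<open>u \<noteq> 0\<close> in \<open>simp add: field_simps\<close>)
qed

lemma tov_mass_density:
  assumes "r \<in> {0..<R}"
  shows "tov_mass density r = tov_mass \<rho>1 r + \<delta>m r"
proof (rule tov_mass_eqI[where R=R])
  show "continuous_on {0..<R} (\<lambda>r. tov_mass \<rho>1 r + \<delta>m r)"
    unfolding mass_shift_eq_mean_density
    by (intro continuous_intros background_continuous(3) continuous_on_mean_density_shift)
  show "(\<lambda>r. tov_mass \<rho>1 r + \<delta>m r) 0 = 0"
    by (simp add: \<delta>m_def)
qed (use assms perturbed_mass_has_derivative in auto)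

lemma pressure_eq_gravity:
  assumes "r \<noteq> 0" and "r \<in> {0..<R}"
  shows "pressure r = p1 r - \<delta>m r * (1 + 2 * r * g r) / (4 * pi * r^3)"
proof -
  have e: "(1 + 8 * pi * p1 r * r^2) / (1 - 2 * tov_mass \<rho>1 r / r) = 1 + 2 * r * g r"
    using one_plus_tov_gravity[OF assms(1) metric_nonzero[OF assms(2)]] by (simp add: g_def)
  have "pressure r = p1 r - mean_density_shift r / 3
      * ((1 + 8 * pi * p1 r * r^2) / (1 - 2 * tov_mass \<rho>1 r / r))"
    by (simp add: pressure_def)
  also have "\<dots> = p1 r - \<delta>m r * (1 + 2 * r * g r) / (4 * pi * r^3)"
    unfolding e using assms(1) by (simp add: mass_shift_eq_mean_density field_simps)
  finally show ?thesis .
qed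

lemma pressure_has_derivative:
  assumes x: "0 < x" "x < R" and b': "1 - 2 * (tov_mass \<rho>1 x + \<delta>m x) / x \<noteq> 0"
  shows "(pressure has_real_derivative
    - (density x + pressure x) * tov_gravity (tov_mass \<rho>1 x + \<delta>m x) (pressure x) x) (at x)"
proof -
  have reg: "1 + x * g x \<noteq> 0" and b: "1 - 2 * tov_mass \<rho>1 x / x \<noteq> 0" and "x \<noteq> 0"
    using x regular_nonzero[of x] metric_nonzero[of x] by auto
  define u where "u = 1 + x * g x"
  have "u \<noteq> 0"
    using reg by (simp add: u_def)
  have dp: "(p1 has_real_derivative - (\<rho>1 x + p1 x) * g x) (at x)"
    using tov x by (simp add: tov_regular_iff_gravity g_def)
  have dm: "(\<delta>m has_real_derivative 4 * pi * x^2 * (density x - \<rho>1 x)) (at x)"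
    using DERIV_diff[OF perturbed_mass_has_derivative[OF x] tov_mass_has_derivative[OF background_continuous(1) x]]
    by (simp add: right_diff_distrib)
  have D: "4 * pi * x^2 * (density x - \<rho>1 x) = \<delta>m x * (3 * (1 + x * g x)
      - 2 * x^2 * (gravity_slope x / x^2 + (g x)^2)) / (x * (1 + x * g x))"
  proof -
    have W: "2 * x^2 * (gravity_slope x / x^2 + (g x)^2) = 2 * (gravity_slope x + (x * g x)^2)"
      using \<open>x \<noteq> 0\<close> by (simp add: field_simps power2_eq_square)
    show ?thesis
      by (simp only: density_def mass_shift_eq_mean_density mean_density_shift_def W u_def[symmetric])
        (use \<open>x \<noteq> 0\<close> \<open>u \<noteq> 0\<close> in \<open>simp add: field_simps power2_eq_square power3_eq_cube\<close>)
  qed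
  have "((\<lambda>r. p1 r - \<delta>m r * (1 + 2 * r * g r) / (4 * pi * r^3)) has_real_derivative
      - (density x + pressure x) * g x) (at x)"
    using mass_shift_pressure_has_derivative[OF \<open>x \<noteq> 0\<close> reg dp gravity_has_derivative[OF x] dm D] x
    by (simp add: pressure_eq_gravity)
  then have "(pressure has_real_derivative - (density x + pressure x) * g x) (at x)"
    by (rule has_field_derivative_transform_within_open[where S="{0<..<R}"])
      (use x in \<open>auto simp: pressure_eq_gravity\<close>)
  moreover have "g x = tov_gravity (tov_mass \<rho>1 x + \<delta>m x) (pressure x) x"
  proof -
    have "tov_gravity (tov_mass \<rho>1 x) (p1 x) x = g x"
      by (simp add: g_def)
    with tov_gravity_mass_shift[OF \<open>x \<noteq> 0\<close> b b', of "p1 x"] x show ?thesis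
      by (simp add: pressure_eq_gravity)
  qed
  ultimately show ?thesis
    by simp
qed

lemma tov_regular_density_pressure:
  assumes horizon: "\<forall>r\<in>{0<..<R}. 1 - 2 * (tov_mass \<rho>1 r + \<delta>m r) / r > 0"
  shows "tov_regular R density pressure"
  unfolding tov_regular_iff_gravity
proof (intro conjI ballI continuous_on_density continuous_on_pressure)
  fix r assume r: "r \<in> {0<..<R}"
  then have m: "tov_mass density r = tov_mass \<rho>1 r + \<delta>m r"
    by (intro tov_mass_density) auto
  have pos: "1 - 2 * (tov_mass \<rho>1 r + \<delta>m r) / r > 0"
    using horizon r by blast
  then show "1 - 2 * tov_mass density r / r > 0"
    by (simp add: m)
  show "(pressure has_real_derivative
      - (density r + pressure r) * tov_gravity (tov_mass density r) (pressure r) r) (at r)"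
    unfolding m using r pos by (intro pressure_has_derivative) auto
qed

lemma density_eq_cases:
  assumes "r \<in> {0..<R}"
  shows "density r = (if r = 0 then \<rho>1 0 + \<delta>\<rho>c
    else deriv (\<lambda>s. tov_mass \<rho>1 s + \<delta>m s) r / (4 * pi * r^2))"
proof (cases "r = 0")
  case True
  then show ?thesis
    by (simp add: density_def mean_density_shift_def mass_exponent_def gravity_slope_def gravity_0)
next
  case False
  with assms have r: "0 < r" "r < R"
    by auto
  with DERIV_imp_deriv[OF perturbed_mass_has_derivative[OF r]] show ?thesis
    by simp
qed

lemma pressure_eq_cases:
  assumes "r \<in> {0..<R}"
  shows "pressure r = (if r = 0 then p1 0 - \<delta>\<rho>c / 3
    else p1 r - \<delta>m r / (4 * pi * r^3) * (1 + 8 * pi * p1 r * r^2) / (1 - 2 * tov_mass \<rho>1 r / r))"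
proof (cases "r = 0")
  case True
  then show ?thesis
    by (simp add: pressure_def mean_density_shift_def mass_exponent_def gravity_0)
next
  case False
  then have "\<delta>m r / (4 * pi * r^3) = mean_density_shift r / 3"
    by (simp add: mass_shift_eq_mean_density field_simps)
  with False show ?thesis
    by (simp only: pressure_def if_False)
qed

theorem tov_regular_mass_perturbation:
  assumes "\<forall>r\<in>{0<..<R}. 1 - 2 * (tov_mass \<rho>1 r + \<delta>m r) / r > 0"
    and \<rho>_def: "\<rho> = (\<lambda>r. if r = 0 then \<rho>1 0 + \<delta>\<rho>c
      else deriv (\<lambda>s. tov_mass \<rho>1 s + \<delta>m s) r / (4 * pi * r^2))"
    and p_def: "p = (\<lambda>r. if r = 0 then p1 0 - \<delta>\<rho>c / 3
      else p1 r - \<delta>m r / (4 * pi * r^3) * (1 + 8 * pi * p1 r * r^2) / (1 - 2 * tov_mass \<rho>1 r / r))"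
  shows "tov_regular R \<rho> p" and "\<forall>r\<in>{0..<R}. tov_mass \<rho> r = tov_mass \<rho>1 r + \<delta>m r"
proof -
  have \<rho>: "\<rho> r = density r" and p: "p r = pressure r" if "r \<in> {0..<R}" for r
    using density_eq_cases[OF that] pressure_eq_cases[OF that] by (simp_all add: \<rho>_def p_def)
  show "tov_regular R \<rho> p"
    by (rule tov_regular_transform[OF tov_regular_density_pressure[OF assms(1)] \<rho> p])
  show "\<forall>r\<in>{0..<R}. tov_mass \<rho> r = tov_mass \<rho>1 r + \<delta>m r"
  proof
    fix r assume r: "r \<in> {0..<R}"
    have "tov_mass \<rho> r = tov_mass density r"
      using r by (intro tov_mass_cong \<rho>) auto
    with tov_mass_density[OF r] show "tov_mass \<rho> r = tov_mass \<rho>1 r + \<delta>m r"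
      by simp
  qed
qed

end

theorem theoremP3:
  fixes \<rho>0 p0 :: "real \<Rightarrow> real" and R R' \<Delta>p \<delta>\<rho>c :: real
    and m0 g0 I0 \<delta>p1 g1 \<delta>m \<delta>p \<rho> p :: "real \<Rightarrow> real"
  assumes tov0: "tov_regular R \<rho>0 p0"
    and m0_def: "m0 = tov_mass \<rho>0"
    and g0_def: "g0 = (\<lambda>r. (m0 r + 4 * pi * p0 r * r^3) / (r^2 * (1 - 2 * m0 r / r)))"
    and I0_def: "I0 = (\<lambda>r. integral {0..r} g0)"
    and dp1_def: "\<delta>p1 = (\<lambda>r. \<Delta>p * sqrt (1 - 2 * m0 r / r) * exp (- 2 * I0 r)
          / (1 + 4 * pi * \<Delta>p * integral {0..r} (\<lambda>s. s * exp (- 2 * I0 s) / sqrt (1 - 2 * m0 s / s))))"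
    and g1_def: "g1 = (\<lambda>r. g0 r + 4 * pi * \<delta>p1 r * r / (1 - 2 * m0 r / r))"
    and dm_def: "\<delta>m = (\<lambda>r. 4 * pi * r^3 * \<delta>\<rho>c / (3 * (1 + r * g1 r)^2)
          * exp (2 * integral {0..r} (\<lambda>s. g1 s * (1 - s * g1 s) / (1 + s * g1 s))))"
    and dp_def: "\<delta>p = (\<lambda>r. \<delta>p1 r - \<delta>m r / (4 * pi * r^3)
          * (1 + 8 * pi * (p0 r + \<delta>p1 r) * r^2) / (1 - 2 * m0 r / r))"
    and rho_def: "\<rho> = (\<lambda>r. if r = 0 then \<rho>0 0 + \<delta>\<rho>c
          else deriv (\<lambda>s. m0 s + \<delta>m s) r / (4 * pi * r^2))"
    and p_def: "p = (\<lambda>r. if r = 0 then p0 0 + (\<Delta>p - \<delta>\<rho>c / 3) else p0 r + \<delta>p r)"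
    and R'_le: "R' \<le> R"
    and den1: "\<forall>r\<in>{0..<R'}. 1 + 4 * pi * \<Delta>p
          * integral {0..r} (\<lambda>s. s * exp (- 2 * I0 s) / sqrt (1 - 2 * m0 s / s)) > 0"
    and den2: "\<forall>r\<in>{0..<R'}. 1 + r * g1 r > 0"
    and den3: "\<forall>r\<in>{0<..<R'}. 1 - 2 * (m0 r + \<delta>m r) / r > 0"
  shows "tov_regular R' \<rho> p
     \<and> (\<forall>r\<in>{0..<R'}. tov_mass \<rho> r = m0 r + \<delta>m r)
     \<and> \<rho> 0 = \<rho>0 0 + \<delta>\<rho>c \<and> p 0 = p0 0 + (\<Delta>p - \<delta>\<rho>c / 3)"
proof -
  define p1 where "p1 = (\<lambda>r. p0 r + \<delta>p1 r)"
  have g0: "g0 = (\<lambda>r. tov_gravity (m0 r) (p0 r) r)"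
    by (simp add: g0_def tov_gravity_def)
  have I0: "I0 = (\<lambda>r. integral {0..r} (\<lambda>s. tov_gravity (tov_mass \<rho>0 s) (p0 s) s))"
    unfolding I0_def g0 m0_def ..
  have tov1: "tov_regular R' \<rho>0 p1"
    unfolding p1_def
    by (rule tov_pressure_perturbation[OF tov0 R'_le I0 dp1_def[unfolded m0_def] den1[unfolded m0_def]])
  have g1: "g1 = (\<lambda>r. tov_gravity (tov_mass \<rho>0 r) (p1 r) r)"
    by (simp add: fun_eq_iff g1_def g0 p1_def tov_gravity_pressure_shift m0_def)
  interpret tov_mass_perturbation R' \<delta>\<rho>c \<rho>0 p1 g1 \<delta>m
    by unfold_locales (fact tov1 g1 dm_def den2)+
  have "\<delta>p1 0 = \<Delta>p"
    by (simp add: dp1_def I0_def)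
  then have "p = (\<lambda>r. if r = 0 then p1 0 - \<delta>\<rho>c / 3
      else p1 r - \<delta>m r / (4 * pi * r^3) * (1 + 8 * pi * p1 r * r^2) / (1 - 2 * tov_mass \<rho>0 r / r))"
    by (auto simp: fun_eq_iff p_def dp_def p1_def m0_def)
  from tov_regular_mass_perturbation[OF den3[unfolded m0_def] rho_def[unfolded m0_def] this]
  have "tov_regular R' \<rho> p" and "\<forall>r\<in>{0..<R'}. tov_mass \<rho> r = m0 r + \<delta>m r"
    unfolding m0_def by blast+
  moreover have "\<rho> 0 = \<rho>0 0 + \<delta>\<rho>c" and "p 0 = p0 0 + (\<Delta>p - \<delta>\<rho>c / 3)"
    by (simp_all add: rho_def p_def)
  ultimately show ?thesis
    by blast
qed

end
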